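(* Let $K\subset\mathbb{R}^n$ be compact, $g\in C^1(\mathbb{R}^n)$, $j>0$, and $$E=\{x\in K:\ g(y)\ge g(x)+\langle\nabla g(x),y-x\rangle-j|y-x|^2\ \text{for all } y\in K\}.$$ Then for almost every $x\in E$, $$\limsup_{y\to x,\ y\in E}\frac{|g(y)-g(x)-\langle\nabla g(x),y-x\rangle|}{|y-x|^2}<+\infty.$$
   Context: "Almost every" refers to Lebesgue measure on $\mathbb{R}^n$. *)

theory Defs
  imports "HOL-Analysis.Analysis"
begin

end

theory Submission
  imports Defs
begin

(*
  Adding j |x|^2 turns the one-sided Taylor condition defining E into convexity: the upper envelope
  phi of the affine functions  y |-> g z + G z . (y - z) - j |y - z|^2 + j |y|^2  (z in E) is convex,
  equals g + j |.|^2 on E, and has the subgradient G x + 2 j x at every x in E. It therefore suffices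
  to show that a convex phi with subgradient p at x satisfies phi y - phi x - p . (y - x) = O(|y - x|^2)
  for almost every x.

  Since y lies in the cross-polytope with vertices x +- r e_i (r the l1-distance of y from x), Jensen's
  inequality reduces this to the second differences phi (x + t e_i) + phi (x - t e_i) - 2 phi x being
  O(t^2) along each coordinate direction. By Fubini this is a question about convex functions h of one
  variable, whose second difference at s with step t is at most t (h'+(s + t) - h'+(s - t)). Covering
  the bad points by disjoint Vitali intervals on which the second difference exceeds C t^2, their
  total length is at most 2/C times the increase of the monotone right derivative h'+, so the bad
  set is null.
*)

definition second_diff :: "('a::real_vector \<Rightarrow> real) \<Rightarrow> 'a \<Rightarrow> 'a \<Rightarrow> real \<Rightarrow> real" where
  "second_diff f x v t = f (x + t *\<^sub>R v) + f (x - t *\<^sub>R v) - 2 * f x"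

definition superquadratic_points :: "('a::real_vector \<Rightarrow> real) \<Rightarrow> 'a \<Rightarrow> 'a set" where
  "superquadratic_points f v =
     {x. \<forall>C>0. \<forall>\<delta>>0. \<exists>t. 0 < t \<and> t < \<delta> \<and> C * t\<^sup>2 < second_diff f x v t}"

section \<open>Second differences of convex functions of one variable\<close>

lemma convex_on_slope_mono:
  fixes h :: "real \<Rightarrow> real"
  assumes "convex_on UNIV h" "u < v" "v < w"
  shows "(h v - h u) / (v - u) \<le> (h w - h v) / (w - v)"
  using convex_on_slope_le[OF assms(1), of u w v] assms(2,3)
    minus_divide_divide[of "h v - h u" "v - u"] minus_divide_divide[of "h w - h v" "w - v"]
  by simp

text \<open>For convex \<open>h\<close> the difference quotients decrease as \<open>v\<close> approaches \<open>u\<close> from the right,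
  so this is the right derivative; only its monotonicity is used.\<close>

definition right_deriv :: "(real \<Rightarrow> real) \<Rightarrow> real \<Rightarrow> real" where
  "right_deriv h u = Inf ((\<lambda>v. (h v - h u) / (v - u)) ` {u<..})"

lemma right_deriv_le_slope:
  assumes "convex_on UNIV h" "u < v"
  shows "right_deriv h u \<le> (h v - h u) / (v - u)"
  unfolding right_deriv_def
proof (rule cInf_lower)
  show "bdd_below ((\<lambda>v. (h v - h u) / (v - u)) ` {u<..})"
    by (rule bdd_belowI2[of _ "h u - h (u - 1)"])
       (use convex_on_slope_mono[OF assms(1), of "u - 1" u] in auto)
qed (use assms in auto)

lemma slope_le_right_deriv:
  assumes "convex_on UNIV h" "u < v"
  shows "(h v - h u) / (v - u) \<le> right_deriv h v"
  unfolding right_deriv_def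
  by (rule cInf_greatest) (auto intro!: convex_on_slope_mono[OF assms(1)] simp: assms)

lemma mono_right_deriv:
  assumes "convex_on UNIV h"
  shows "mono (right_deriv h)"
proof
  fix u v :: real assume "u \<le> v"
  then show "right_deriv h u \<le> right_deriv h v"
    using right_deriv_le_slope[OF assms, of u v] slope_le_right_deriv[OF assms, of u v]
    by (cases "u = v") auto
qed

lemma second_diff_le_right_deriv:
  assumes "convex_on UNIV h" "0 < t"
  shows "second_diff h s 1 t \<le> t * (right_deriv h (s + t) - right_deriv h (s - t))"
proof -
  have "second_diff h s 1 t = t * ((h (s + t) - h s) / t - (h s - h (s - t)) / t)"
    using assms(2) by (simp add: second_diff_def field_simps)
  also have "\<dots> \<le> t * (right_deriv h (s + t) - right_deriv h (s - t))"
    using slope_le_right_deriv[OF assms(1), of s "s + t"] right_deriv_le_slope[OF assms(1), of "s - t" s]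
      assms(2)
    by (intro mult_left_mono) auto
  finally show ?thesis .
qed

lemma sum_increments_le:
  fixes r :: "real \<Rightarrow> real"
  assumes "mono r" "finite I"
    and "\<And>i. i \<in> I \<Longrightarrow> A \<le> c i \<and> c i \<le> d i \<and> d i \<le> B"
    and "\<And>i j. i \<in> I \<Longrightarrow> j \<in> I \<Longrightarrow> i \<noteq> j \<Longrightarrow> d i < c j \<or> d j < c i"
    and "A \<le> B"
  shows "(\<Sum>i\<in>I. r (d i) - r (c i)) \<le> r B - r A"
  using assms(2-)
proof (induction "card I" arbitrary: I B rule: less_induct)
  case less
  show ?case
  proof (cases "I = {}")
    case True
    then show ?thesis using less.prems \<open>mono r\<close> by (simp add: monoD)
  next
    case False
    have "Max (c ` I) \<in> c ` I"
      using False less.prems(1) by (intro Max_in) auto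
    then obtain i0 where i0: "i0 \<in> I" "c i0 = Max (c ` I)"
      by auto
    have below_i0: "A \<le> c i \<and> c i \<le> d i \<and> d i \<le> c i0" if "i \<in> I - {i0}" for i
    proof -
      have "c i \<le> c i0" using i0 that less.prems(1) by simp
      then show ?thesis
        using less.prems(2)[of i] less.prems(3)[of i i0] less.prems(2)[of i0] i0 that by force
    qed
    have "(\<Sum>i\<in>I - {i0}. r (d i) - r (c i)) \<le> r (c i0) - r A"
    proof (rule less.hyps)
      show "card (I - {i0}) < card I" using less.prems(1) i0(1) by (rule card_Diff1_less)
      show "A \<le> c i0" using less.prems(2) i0(1) by blast
    qed (use less.prems below_i0 in auto)
    moreover have "(\<Sum>i\<in>I. r (d i) - r (c i)) = (r (d i0) - r (c i0)) + (\<Sum>i\<in>I - {i0}. r (d i) - r (c i))"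
      using i0 less.prems(1) by (simp add: sum.remove)
    ultimately show ?thesis
      using monoD[OF \<open>mono r\<close>, of "d i0" B] less.prems(2)[of i0] i0 by linarith
  qed
qed

lemma disjnt_cball_real_separated:
  fixes s s' t t' :: real
  assumes "disjnt (cball s t) (cball s' t')" "0 < t" "0 < t'"
  shows "s + t < s' - t' \<or> s' + t' < s - t"
proof (rule ccontr)
  assume "\<not> ?thesis"
  then have "max (s - t) (s' - t') \<in> cball s t \<inter> cball s' t'"
    using assms(2,3) by (auto simp: cball_eq_atLeastAtMost)
  then show False using assms(1) by (auto simp: disjnt_def)
qed

lemma measure_cballs_le_right_deriv:
  fixes h :: "real \<Rightarrow> real"
  assumes cv: "convex_on UNIV h" and "0 < C" "finite I" "A \<le> B"
    and balls: "\<And>i. i \<in> I \<Longrightarrow>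
      0 < r i \<and> A \<le> a i - r i \<and> a i + r i \<le> B \<and> C * (r i)\<^sup>2 < second_diff h (a i) 1 (r i)"
    and disjoint: "pairwise (\<lambda>i j. disjnt (cball (a i) (r i)) (cball (a j) (r j))) I"
  shows "C * measure lebesgue (\<Union>i\<in>I. cball (a i) (r i)) \<le> 2 * (right_deriv h B - right_deriv h A)"
proof -
  have "measure lebesgue (\<Union>i\<in>I. cball (a i) (r i)) \<le> (\<Sum>i\<in>I. measure lebesgue (cball (a i) (r i)))"
    using \<open>finite I\<close> by (intro measure_UNION_le) auto
  also have "\<dots> = (\<Sum>i\<in>I. 2 * r i)"
  proof (rule sum.cong)
    show "measure lebesgue (cball (a i) (r i)) = 2 * r i" if "i \<in> I" for i
      using balls[OF that] by (simp add: cball_eq_atLeastAtMost)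
  qed simp
  finally have measure_le: "measure lebesgue (\<Union>i\<in>I. cball (a i) (r i)) \<le> 2 * (\<Sum>i\<in>I. r i)"
    by (simp add: sum_distrib_left)
  have "C * (\<Sum>i\<in>I. r i) \<le> (\<Sum>i\<in>I. right_deriv h (a i + r i) - right_deriv h (a i - r i))"
    unfolding sum_distrib_left
  proof (rule sum_mono)
    fix i assume "i \<in> I"
    have "C * (r i)\<^sup>2 < r i * (right_deriv h (a i + r i) - right_deriv h (a i - r i))"
      using balls[OF \<open>i \<in> I\<close>] second_diff_le_right_deriv[OF cv, of "r i" "a i"] by linarith
    then have "r i * (C * r i) < r i * (right_deriv h (a i + r i) - right_deriv h (a i - r i))"
      by (simp add: power2_eq_square algebra_simps)
    then show "C * r i \<le> right_deriv h (a i + r i) - right_deriv h (a i - r i)"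
      using balls[OF \<open>i \<in> I\<close>] by simp
  qed
  also have "\<dots> \<le> right_deriv h B - right_deriv h A"
  proof (rule sum_increments_le[OF mono_right_deriv[OF cv] \<open>finite I\<close> _ _ \<open>A \<le> B\<close>])
    show "A \<le> a i - r i \<and> a i - r i \<le> a i + r i \<and> a i + r i \<le> B" if "i \<in> I" for i
      using balls[OF that] by auto
    show "a i + r i < a j - r j \<or> a j + r j < a i - r i" if "i \<in> I" "j \<in> I" "i \<noteq> j" for i j
      using disjoint that balls[of i] balls[of j]
      by (intro disjnt_cball_real_separated) (auto simp: pairwise_def)
  qed
  finally have "C * (\<Sum>i\<in>I. r i) \<le> right_deriv h B - right_deriv h A" .
  moreover have "C * measure lebesgue (\<Union>i\<in>I. cball (a i) (r i)) \<le> 2 * (C * (\<Sum>i\<in>I. r i))"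
    using mult_left_mono[OF measure_le, of C] \<open>0 < C\<close> by (simp add: mult.left_commute)
  ultimately show ?thesis
    by (meson order.trans mult_left_mono zero_le_numeral)
qed

lemma Vitali_covering_outer_measure_le:
  fixes a :: "'i \<Rightarrow> 'n::euclidean_space"
  assumes r: "\<And>i. i \<in> K \<Longrightarrow> 0 < r i"
    and fine: "\<And>x d. x \<in> S \<Longrightarrow> 0 < d \<Longrightarrow> \<exists>i. i \<in> K \<and> x \<in> cball (a i) (r i) \<and> r i < d"
    and bound: "\<And>I. I \<subseteq> K \<Longrightarrow> finite I \<Longrightarrow>
      pairwise (\<lambda>i j. disjnt (cball (a i) (r i)) (cball (a j) (r j))) I \<Longrightarrow>
      measure lebesgue (\<Union>i\<in>I. cball (a i) (r i)) \<le> M"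
  obtains T where "S \<subseteq> T" "T \<in> lmeasurable" "measure lebesgue T \<le> M"
proof -
  obtain D where D: "countable D" "D \<subseteq> K"
    "pairwise (\<lambda>i j. disjnt (cball (a i) (r i)) (cball (a j) (r j))) D"
    "negligible (S - (\<Union>i\<in>D. cball (a i) (r i)))"
  proof (rule Vitali_covering_theorem_cballs[of K r S a])
    show "0 < r i" if "i \<in> K" for i
      using that by (rule r)
    show "\<exists>i. i \<in> K \<and> x \<in> cball (a i) (r i) \<and> r i < d" if "x \<in> S" "0 < d" for x d
      using that by (rule fine)
  qed (rule that)
  define U where "U = (\<Union>i\<in>D. cball (a i) (r i))"
  have finite_bound: "measure lebesgue (\<Union>i\<in>I. cball (a i) (r i)) \<le> M" if "I \<subseteq> D" "finite I" for I
  proof (rule bound)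
    show "I \<subseteq> K"
      using that(1) D(2) by (rule order.trans)
    show "pairwise (\<lambda>i j. disjnt (cball (a i) (r i)) (cball (a j) (r j))) I"
      using D(3) that(1) by (rule pairwise_subset)
  qed (rule that(2))
  have U: "U \<in> lmeasurable" "measure lebesgue U \<le> M"
    unfolding U_def using fmeasurable_UN_bound[OF D(1) lmeasurable_cball finite_bound]
      measure_UN_bound[OF D(1) lmeasurable_cball finite_bound] by auto
  have "negligible (S - U)"
    using D(4) by (simp only: U_def)
  moreover have "(U - (U \<union> S)) \<union> ((U \<union> S) - U) = S - U"
    by blast
  ultimately have "negligible ((U - (U \<union> S)) \<union> ((U \<union> S) - U))"
    by (simp only:)
  then have "U \<union> S \<in> lmeasurable" "measure lebesgue (U \<union> S) = measure lebesgue U"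
    using lmeasurable_negligible_symdiff[OF U(1)] measure_negligible_symdiff[OF U(1)] by blast+
  moreover have "S \<subseteq> U \<union> S"
    by blast
  ultimately show ?thesis
    using U(2) that[of "U \<union> S"] by simp
qed

lemma negligible_superquadratic_points_ball:
  fixes h :: "real \<Rightarrow> real"
  assumes cv: "convex_on UNIV h" and "0 \<le> k"
  shows "negligible (superquadratic_points h 1 \<inter> ball 0 k)"
  unfolding negligible_outer_le
proof (intro allI impI)
  fix e :: real assume "0 < e"
  define S where "S = superquadratic_points h 1 \<inter> ball 0 k"
  define M where "M = right_deriv h (k + 1) - right_deriv h (- (k + 1))"
  define C where "C = 2 * (M + 1) / e"
  have "0 \<le> M"
    unfolding M_def using monoD[OF mono_right_deriv[OF cv], of "- (k + 1)" "k + 1"] \<open>0 \<le> k\<close> by simp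
  then have "0 < C" "2 * M / C \<le> e"
    unfolding C_def using \<open>0 < e\<close> by (auto simp: field_simps)
  define K where "K = {(s, t). s \<in> S \<and> 0 < t \<and> t < 1 \<and> C * t\<^sup>2 < second_diff h s 1 t}"
  obtain T where "S \<subseteq> T" "T \<in> lmeasurable" "measure lebesgue T \<le> 2 * M / C"
  proof (rule Vitali_covering_outer_measure_le[of K snd S fst])
    show "0 < snd i" if "i \<in> K" for i
      using that by (auto simp: K_def)
    show "\<exists>i. i \<in> K \<and> x \<in> cball (fst i) (snd i) \<and> snd i < d" if x: "x \<in> S" and d: "0 < d" for x d
    proof -
      have "\<forall>\<delta>>0. \<exists>t. 0 < t \<and> t < \<delta> \<and> C * t\<^sup>2 < second_diff h x 1 t"
        using x \<open>0 < C\<close> by (simp add: S_def superquadratic_points_def)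
      moreover have "0 < min d 1" using d by simp
      ultimately obtain t where "0 < t" "t < min d 1" "C * t\<^sup>2 < second_diff h x 1 t"
        by blast
      then show ?thesis
        using x by (intro exI[of _ "(x, t)"]) (auto simp: K_def)
    qed
    show "measure lebesgue (\<Union>i\<in>I. cball (fst i) (snd i)) \<le> 2 * M / C"
      if "I \<subseteq> K" "finite I" and disjoint: "pairwise (\<lambda>i j. disjnt (cball (fst i) (snd i)) (cball (fst j) (snd j))) I"
      for I
    proof -
      have "C * measure lebesgue (\<Union>i\<in>I. cball (fst i) (snd i)) \<le> 2 * M"
        unfolding M_def
      proof (rule measure_cballs_le_right_deriv[OF cv \<open>0 < C\<close> \<open>finite I\<close> _ _ disjoint])
        show "0 < snd i \<and> - (k + 1) \<le> fst i - snd i \<and> fst i + snd i \<le> k + 1 \<and>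
            C * (snd i)\<^sup>2 < second_diff h (fst i) 1 (snd i)" if "i \<in> I" for i
          using \<open>I \<subseteq> K\<close> that by (auto simp: K_def S_def dist_real_def)
      qed (use \<open>0 \<le> k\<close> in simp)
      then show ?thesis
        using \<open>0 < C\<close> by (simp add: pos_le_divide_eq mult.commute)
    qed
  qed
  then show "\<exists>T. superquadratic_points h 1 \<inter> ball 0 k \<subseteq> T \<and> T \<in> lmeasurable \<and> measure lebesgue T \<le> e"
    unfolding S_def using \<open>2 * M / C \<le> e\<close> by auto
qed

lemma negligible_superquadratic_points_real:
  fixes h :: "real \<Rightarrow> real"
  assumes "convex_on UNIV h"
  shows "negligible (superquadratic_points h 1)"
proof -
  have "superquadratic_points h 1 = (\<Union>n. superquadratic_points h 1 \<inter> ball 0 (real n))"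
    by (auto simp: dist_real_def) (meson reals_Archimedean2)
  also have "negligible \<dots>"
    by (rule negligible_countable_Union) (auto intro!: negligible_superquadratic_points_ball assms)
  finally show ?thesis .
qed

section \<open>Second differences along coordinate lines\<close>

lemma convex_on_line:
  fixes \<phi> :: "'a::real_vector \<Rightarrow> real"
  assumes "convex_on UNIV \<phi>"
  shows "convex_on UNIV (\<lambda>t. \<phi> (w + t *\<^sub>R v))"
proof (rule convex_onI)
  fix t x y :: real assume "0 < t" "t < 1"
  have "w + ((1 - t) *\<^sub>R x + t *\<^sub>R y) *\<^sub>R v = (1 - t) *\<^sub>R (w + x *\<^sub>R v) + t *\<^sub>R (w + y *\<^sub>R v)"
    by (simp add: algebra_simps)
  then show "\<phi> (w + ((1 - t) *\<^sub>R x + t *\<^sub>R y) *\<^sub>R v) \<le> (1 - t) * \<phi> (w + x *\<^sub>R v) + t * \<phi> (w + y *\<^sub>R v)"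
    using convex_onD[OF assms, of t] \<open>0 < t\<close> \<open>t < 1\<close> by simp
qed (rule convex_UNIV)

lemma superquadratic_points_line:
  "{t. w + t *\<^sub>R v \<in> superquadratic_points f v} = superquadratic_points (\<lambda>t. f (w + t *\<^sub>R v)) 1"
proof -
  have "w + t *\<^sub>R v + s *\<^sub>R v = w + (t + s) *\<^sub>R v" "w + t *\<^sub>R v - s *\<^sub>R v = w + (t - s) *\<^sub>R v"
    for t s :: real
    by (simp_all add: algebra_simps)
  then show ?thesis
    by (simp only: superquadratic_points_def second_diff_def mem_Collect_eq real_scaleR_def mult_1_right)
qed

lemma superquadratic_points_borel:
  fixes f :: "'a::real_normed_vector \<Rightarrow> real"
  assumes cont: "continuous_on UNIV f"
  shows "superquadratic_points f v \<in> sets borel"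
proof -
  define Opn where "Opn n = {x. \<exists>t. 0 < t \<and> t < 1 / real (Suc n) \<and> real (Suc n) * t\<^sup>2 < second_diff f x v t}"
    for n
  have "open (Opn n)" for n
  proof -
    have "continuous_on UNIV (\<lambda>x. second_diff f x v t)" for t
      unfolding second_diff_def
      by (intro continuous_intros continuous_on_compose2[OF cont]) auto
    then have "open (\<Union>t\<in>{0<..<1 / real (Suc n)}. {x. real (Suc n) * t\<^sup>2 < second_diff f x v t})"
      by (intro open_UN ballI open_Collect_less continuous_intros) auto
    moreover have "Opn n = (\<Union>t\<in>{0<..<1 / real (Suc n)}. {x. real (Suc n) * t\<^sup>2 < second_diff f x v t})"
      by (auto simp: Opn_def)
    ultimately show ?thesis by simp
  qed
  moreover have "superquadratic_points f v = (\<Inter>n. Opn n)"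
  proof (intro equalityI subsetI)
    fix x assume "x \<in> (\<Inter>n. Opn n)"
    show "x \<in> superquadratic_points f v"
      unfolding superquadratic_points_def
    proof (intro CollectI allI impI)
      fix C \<delta> :: real assume "0 < C" "0 < \<delta>"
      obtain n :: nat where n: "max C (1 / \<delta>) < n"
        using reals_Archimedean2 by blast
      then have "C \<le> real (Suc n)" "1 / real (Suc n) < \<delta>"
        using \<open>0 < \<delta>\<close> by (auto simp: field_simps)
      moreover obtain t where "0 < t" "t < 1 / real (Suc n)" "real (Suc n) * t\<^sup>2 < second_diff f x v t"
        using \<open>x \<in> (\<Inter>n. Opn n)\<close> by (auto simp: Opn_def)
      moreover have "C * t\<^sup>2 \<le> real (Suc n) * t\<^sup>2"
        using \<open>C \<le> real (Suc n)\<close> by (intro mult_right_mono) auto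
      ultimately show "\<exists>t. 0 < t \<and> t < \<delta> \<and> C * t\<^sup>2 < second_diff f x v t"
        by (intro exI[of _ t] conjI) linarith+
    qed
  qed (auto simp: Opn_def superquadratic_points_def)
  ultimately show ?thesis
    by (auto intro: borel_open)
qed

lemma null_sets_lborel_if_null_lines:
  fixes B :: "'a::euclidean_space set"
  assumes B: "B \<in> sets borel" and i: "i \<in> Basis"
    and lines: "\<And>w. {t. w + t *\<^sub>R i \<in> B} \<in> null_sets lborel"
  shows "B \<in> null_sets lborel"
proof -
  interpret P: product_sigma_finite "\<lambda>_::'a. lborel :: real measure"
    by (simp add: product_sigma_finite_def lborel.sigma_finite_measure_axioms)
  define S where "S f = (\<Sum>b\<in>Basis. f b *\<^sub>R b)" for f :: "'a \<Rightarrow> real"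
  have S_meas: "S \<in> (\<Pi>\<^sub>M b\<in>Basis. lborel) \<rightarrow>\<^sub>M borel"
    unfolding S_def by measurable
  have fibre: "S (f(i := t)) = (\<Sum>b\<in>Basis - {i}. f b *\<^sub>R b) + t *\<^sub>R i" for f t
    unfolding S_def using i by (simp add: sum.remove add.commute)
  have "(\<integral>\<^sup>+ t. indicator B (S (f(i := t))) \<partial>lborel) = 0" for f
  proof -
    define Y where "Y = {t. (\<Sum>b\<in>Basis - {i}. f b *\<^sub>R b) + t *\<^sub>R i \<in> B}"
    have "Y \<in> null_sets lborel" unfolding Y_def by (rule lines)
    then have "(\<integral>\<^sup>+ t. indicator Y t \<partial>lborel) = 0"
      by (metis nn_integral_indicator null_setsD1 null_setsD2)
    moreover have "(\<lambda>t. indicator B (S (f(i := t))) :: ennreal) = indicator Y"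
      by (auto simp: fibre Y_def indicator_def)
    ultimately show ?thesis
      by simp
  qed
  note fibres_null = this
  have integrand_meas: "(\<lambda>f. indicator B (S f) :: ennreal) \<in> borel_measurable (\<Pi>\<^sub>M b\<in>Basis. lborel)"
    using measurable_compose[OF S_meas borel_measurable_indicator[OF B]] by (simp add: comp_def)
  have "emeasure lborel B = (\<integral>\<^sup>+ x. indicator B x \<partial>lborel)"
    using B by simp
  also have "\<dots> = (\<integral>\<^sup>+ x. indicator B x \<partial>distr (\<Pi>\<^sub>M b\<in>Basis. lborel) borel S)"
    unfolding S_def by (simp only: lborel_eq[symmetric])
  also have "\<dots> = (\<integral>\<^sup>+ f. indicator B (S f) \<partial>(\<Pi>\<^sub>M b\<in>Basis. lborel))"
    using B by (intro nn_integral_distr[OF S_meas]) simp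
  also have "\<dots> = (\<integral>\<^sup>+ f. indicator B (S f) \<partial>(\<Pi>\<^sub>M b\<in>insert i (Basis - {i}). lborel))"
    using i by (simp add: insert_absorb)
  also have "\<dots> = (\<integral>\<^sup>+ f. (\<integral>\<^sup>+ t. indicator B (S (f(i := t))) \<partial>lborel) \<partial>(\<Pi>\<^sub>M b\<in>Basis - {i}. lborel))"
    using integrand_meas i by (intro P.product_nn_integral_insert) (auto simp: insert_absorb)
  also have "\<dots> = 0"
    by (simp add: fibres_null)
  finally show ?thesis
    using B by auto
qed

lemma superquadratic_points_null:
  fixes \<phi> :: "'a::euclidean_space \<Rightarrow> real"
  assumes cv: "convex_on UNIV \<phi>" and i: "i \<in> Basis"
  shows "superquadratic_points \<phi> i \<in> null_sets lebesgue"
proof -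
  have cont: "continuous_on UNIV \<phi>"
    using convex_on_continuous[OF open_UNIV cv] .
  have "{t. w + t *\<^sub>R i \<in> superquadratic_points \<phi> i} \<in> null_sets lborel" for w
  proof -
    have "continuous_on UNIV (\<lambda>t. \<phi> (w + t *\<^sub>R i))"
      by (intro continuous_on_compose2[OF cont] continuous_intros) auto
    then have "superquadratic_points (\<lambda>t. \<phi> (w + t *\<^sub>R i)) 1 \<in> sets borel"
      by (rule superquadratic_points_borel)
    moreover have "negligible (superquadratic_points (\<lambda>t. \<phi> (w + t *\<^sub>R i)) 1)"
      by (rule negligible_superquadratic_points_real[OF convex_on_line[OF cv]])
    ultimately have "superquadratic_points (\<lambda>t. \<phi> (w + t *\<^sub>R i)) 1 \<in> null_sets lborel"
      by (simp add: negligible_iff_null_sets null_sets_completion_iff)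
    then show ?thesis
      by (simp only: superquadratic_points_line)
  qed
  then have "superquadratic_points \<phi> i \<in> null_sets lborel"
    by (rule null_sets_lborel_if_null_lines[OF superquadratic_points_borel[OF cont] i])
  then show ?thesis
    by (rule null_sets_completionI)
qed

section \<open>Quadratic upper bounds for convex functions\<close>

lemma convex_on_cross_polytope_le:
  fixes \<psi> :: "'a::euclidean_space \<Rightarrow> real"
  assumes cv: "convex_on UNIV \<psi>"
    and vertices: "\<And>i. i \<in> Basis \<Longrightarrow> \<psi> (x + r *\<^sub>R i) \<le> M \<and> \<psi> (x - r *\<^sub>R i) \<le> M"
    and r: "(\<Sum>i\<in>Basis. \<bar>(y - x) \<bullet> i\<bar>) = r"
  shows "\<psi> y \<le> M"
proof (cases "r = 0")
  case True
  then have "y - x = 0"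
    using r by (simp add: sum_nonneg_eq_0_iff euclidean_all_zero_iff)
  moreover obtain i :: 'a where "i \<in> Basis"
    using nonempty_Basis by blast
  ultimately show ?thesis
    using vertices[of i] True by simp
next
  case False
  then have "0 < r"
    using r sum_nonneg[of Basis "\<lambda>i. \<bar>(y - x) \<bullet> i\<bar>"] by simp
  define c where "c i = (y - x) \<bullet> i" for i
  define w where "w i = \<bar>c i\<bar> / r" for i
  define z where "z i = (if 0 \<le> c i then x + r *\<^sub>R i else x - r *\<^sub>R i)" for i
  have w_nonneg: "0 \<le> w i" for i
    using \<open>0 < r\<close> by (simp add: w_def)
  have w_sum: "(\<Sum>i\<in>Basis. w i) = 1"
    using r \<open>0 < r\<close> by (simp add: w_def c_def sum_divide_distrib[symmetric])
  have "w i *\<^sub>R z i = w i *\<^sub>R x + c i *\<^sub>R i" for i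
    using \<open>0 < r\<close> by (simp add: w_def z_def algebra_simps)
  then have "(\<Sum>i\<in>Basis. w i *\<^sub>R z i) = (\<Sum>i\<in>Basis. w i) *\<^sub>R x + (\<Sum>i\<in>Basis. c i *\<^sub>R i)"
    by (simp add: sum.distrib scaleR_sum_left)
  also have "\<dots> = y"
    using w_sum by (simp add: c_def euclidean_representation)
  finally have "\<psi> y \<le> (\<Sum>i\<in>Basis. w i * \<psi> (z i))"
    using convex_on_sum[OF finite_Basis nonempty_Basis cv w_sum, of z] w_nonneg by simp
  also have "\<dots> \<le> (\<Sum>i\<in>Basis. w i * M)"
    using vertices w_nonneg by (intro sum_mono mult_left_mono) (auto simp: z_def)
  also have "\<dots> = M"
    using w_sum by (simp add: sum_distrib_right[symmetric])
  finally show ?thesis .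
qed

lemma second_diff_uniform_bound:
  assumes "finite V" and regular: "\<And>v. v \<in> V \<Longrightarrow> x \<notin> superquadratic_points f v"
  obtains C \<delta> where "0 \<le> C" "0 < \<delta>"
    "\<And>v t. v \<in> V \<Longrightarrow> 0 < t \<Longrightarrow> t < \<delta> \<Longrightarrow> second_diff f x v t \<le> C * t\<^sup>2"
proof -
  have "\<exists>C>0. \<forall>\<^sub>F t in at_right 0. second_diff f x v t \<le> C * t\<^sup>2" if "v \<in> V" for v
    using regular[OF that] unfolding superquadratic_points_def eventually_at_right_field
    by (auto simp: not_less) (metis linorder_not_le)
  then obtain Cv where Cv: "\<And>v. v \<in> V \<Longrightarrow> 0 < Cv v \<and> (\<forall>\<^sub>F t in at_right 0. second_diff f x v t \<le> Cv v * t\<^sup>2)"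
    by metis
  define C where "C = (\<Sum>v\<in>V. Cv v)"
  have Cv_le_C: "Cv v \<le> C" if "v \<in> V" for v
    unfolding C_def using Cv \<open>finite V\<close> that by (intro member_le_sum) (auto intro: less_imp_le)
  have "0 \<le> C"
    unfolding C_def using Cv by (auto intro: sum_nonneg less_imp_le)
  have "\<forall>\<^sub>F t in at_right 0. \<forall>v\<in>V. second_diff f x v t \<le> C * t\<^sup>2"
  proof (rule eventually_mono[OF eventually_ball_finite[OF \<open>finite V\<close>]])
    show "\<forall>v\<in>V. \<forall>\<^sub>F t in at_right 0. second_diff f x v t \<le> Cv v * t\<^sup>2"
      using Cv by blast
    show "\<forall>v\<in>V. second_diff f x v t \<le> C * t\<^sup>2"
      if "\<forall>v\<in>V. second_diff f x v t \<le> Cv v * t\<^sup>2" for t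
      using that Cv_le_C by (meson mult_right_mono order.trans zero_le_power2)
  qed
  then show ?thesis
    using \<open>0 \<le> C\<close> that unfolding eventually_at_right_field by auto
qed

lemma convex_on_minus_affine:
  fixes \<phi> :: "'a::real_inner \<Rightarrow> real"
  assumes "convex_on UNIV \<phi>"
  shows "convex_on UNIV (\<lambda>y. \<phi> y - \<phi> x - p \<bullet> (y - x))"
proof (rule convex_onI)
  fix t :: real and u v :: 'a assume "0 < t" "t < 1"
  have "p \<bullet> ((1 - t) *\<^sub>R u + t *\<^sub>R v - x) = (1 - t) * (p \<bullet> (u - x)) + t * (p \<bullet> (v - x))"
    by (simp add: inner_diff_right inner_add_right algebra_simps)
  then show "\<phi> ((1 - t) *\<^sub>R u + t *\<^sub>R v) - \<phi> x - p \<bullet> ((1 - t) *\<^sub>R u + t *\<^sub>R v - x)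
      \<le> (1 - t) * (\<phi> u - \<phi> x - p \<bullet> (u - x)) + t * (\<phi> v - \<phi> x - p \<bullet> (v - x))"
    using convex_onD[OF assms, of t u v] \<open>0 < t\<close> \<open>t < 1\<close> by (simp add: algebra_simps)
qed (rule convex_UNIV)

lemma convex_on_quadratic_upper_bound:
  fixes \<phi> :: "'a::euclidean_space \<Rightarrow> real"
  assumes cv: "convex_on UNIV \<phi>"
    and subgrad: "\<And>y. \<phi> x + p \<bullet> (y - x) \<le> \<phi> y"
    and regular: "\<And>i. i \<in> Basis \<Longrightarrow> x \<notin> superquadratic_points \<phi> i"
  obtains C \<delta> where "0 \<le> C" "0 < \<delta>"
    "\<And>y. norm (y - x) < \<delta> \<Longrightarrow> \<phi> y - \<phi> x - p \<bullet> (y - x) \<le> C * (norm (y - x))\<^sup>2"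
proof -
  define \<psi> where "\<psi> y = \<phi> y - \<phi> x - p \<bullet> (y - x)" for y
  have \<psi>_nonneg: "0 \<le> \<psi> y" for y
    using subgrad[of y] by (simp add: \<psi>_def)
  have \<psi>_convex: "convex_on UNIV \<psi>"
    unfolding \<psi>_def using cv by (rule convex_on_minus_affine)
  obtain C \<delta> where "0 \<le> C" "0 < \<delta>"
    and second_diff_le: "\<And>i t. i \<in> Basis \<Longrightarrow> 0 < t \<Longrightarrow> t < \<delta> \<Longrightarrow> second_diff \<phi> x i t \<le> C * t\<^sup>2"
    using second_diff_uniform_bound[OF finite_Basis regular] by blast
  have vertices: "\<psi> (x + t *\<^sub>R i) \<le> C * t\<^sup>2 \<and> \<psi> (x - t *\<^sub>R i) \<le> C * t\<^sup>2"
    if "i \<in> Basis" "0 \<le> t" "t < \<delta>" for i t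
  proof (cases "t = 0")
    case False
    have "\<psi> (x + t *\<^sub>R i) + \<psi> (x - t *\<^sub>R i) = second_diff \<phi> x i t"
      by (simp add: \<psi>_def second_diff_def inner_diff_right)
    then show ?thesis
      using second_diff_le[of i t] that False \<psi>_nonneg[of "x + t *\<^sub>R i"] \<psi>_nonneg[of "x - t *\<^sub>R i"]
      by auto
  qed (simp add: \<psi>_def)
  define n where "n = real DIM('a)"
  have "1 \<le> n"
    unfolding n_def using DIM_positive by (simp add: Suc_le_eq)
  show ?thesis
  proof (rule that[of "C * n\<^sup>2" "\<delta> / n"])
    fix y assume y: "norm (y - x) < \<delta> / n"
    define r where "r = (\<Sum>i\<in>Basis. \<bar>(y - x) \<bullet> i\<bar>)"
    have "r \<le> (\<Sum>i\<in>(Basis::'a set). norm (y - x))"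
      unfolding r_def by (intro sum_mono Basis_le_norm)
    then have r_le: "r \<le> n * norm (y - x)"
      by (simp add: n_def)
    also have "\<dots> < \<delta>"
      using y \<open>1 \<le> n\<close> by (simp add: field_simps)
    finally have "r < \<delta>" .
    have "0 \<le> r"
      unfolding r_def by (simp add: sum_nonneg)
    have "\<psi> y \<le> C * r\<^sup>2"
      using vertices \<open>0 \<le> r\<close> \<open>r < \<delta>\<close> r_def by (intro convex_on_cross_polytope_le[OF \<psi>_convex]) auto
    also have "\<dots> \<le> C * (n * norm (y - x))\<^sup>2"
      using r_le \<open>0 \<le> r\<close> \<open>0 \<le> C\<close> by (intro mult_left_mono power_mono) auto
    finally show "\<phi> y - \<phi> x - p \<bullet> (y - x) \<le> C * n\<^sup>2 * (norm (y - x))\<^sup>2"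
      by (simp add: \<psi>_def power_mult_distrib mult.assoc)
  qed (use \<open>0 \<le> C\<close> \<open>0 < \<delta>\<close> \<open>1 \<le> n\<close> in auto)
qed

section \<open>The convex envelope and the main theorem\<close>

lemma convex_on_SUP_affine:
  fixes a :: "'i \<Rightarrow> real" and b :: "'i \<Rightarrow> 'a::real_inner"
  assumes "E \<noteq> {}" and bdd: "\<And>y. bdd_above ((\<lambda>z. a z + b z \<bullet> y) ` E)"
  shows "convex_on UNIV (\<lambda>y. SUP z\<in>E. a z + b z \<bullet> y)"
proof (rule convex_onI)
  fix t :: real and u v :: 'a assume "0 < t" "t < 1"
  show "(SUP z\<in>E. a z + b z \<bullet> ((1 - t) *\<^sub>R u + t *\<^sub>R v))
      \<le> (1 - t) * (SUP z\<in>E. a z + b z \<bullet> u) + t * (SUP z\<in>E. a z + b z \<bullet> v)"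
  proof (rule cSUP_least[OF \<open>E \<noteq> {}\<close>])
    fix z assume "z \<in> E"
    have "a z + b z \<bullet> ((1 - t) *\<^sub>R u + t *\<^sub>R v) = (1 - t) * (a z + b z \<bullet> u) + t * (a z + b z \<bullet> v)"
      by (simp add: inner_add_right algebra_simps)
    also have "\<dots> \<le> (1 - t) * (SUP z\<in>E. a z + b z \<bullet> u) + t * (SUP z\<in>E. a z + b z \<bullet> v)"
      using cSUP_upper[OF \<open>z \<in> E\<close> bdd] \<open>0 < t\<close> \<open>t < 1\<close> by (intro add_mono mult_left_mono) auto
    finally show "a z + b z \<bullet> ((1 - t) *\<^sub>R u + t *\<^sub>R v)
        \<le> (1 - t) * (SUP z\<in>E. a z + b z \<bullet> u) + t * (SUP z\<in>E. a z + b z \<bullet> v)" .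
  qed
qed (rule convex_UNIV)

lemma convex_extension_with_subgradients:
  fixes g :: "'a::euclidean_space \<Rightarrow> real" and G :: "'a \<Rightarrow> 'a"
  assumes K: "compact K" "E \<subseteq> K" and cont: "continuous_on K g" "continuous_on K G"
    and semiconcave: "\<And>x y. x \<in> E \<Longrightarrow> y \<in> E \<Longrightarrow> g x + G x \<bullet> (y - x) - j * (norm (y - x))\<^sup>2 \<le> g y"
  obtains \<phi> where "convex_on UNIV \<phi>" "\<And>x. x \<in> E \<Longrightarrow> \<phi> x = g x + j * (norm x)\<^sup>2"
    "\<And>x y. x \<in> E \<Longrightarrow> \<phi> x + (G x + (2 * j) *\<^sub>R x) \<bullet> (y - x) \<le> \<phi> y"
proof (cases "E = {}")
  case True
  then show ?thesis
    by (intro that[of "\<lambda>_. 0"]) (auto simp: convex_on_const)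
next
  case False
  define b where "b z = G z + (2 * j) *\<^sub>R z" for z
  define a where "a z = g z - G z \<bullet> z - j * (norm z)\<^sup>2" for z
  define \<phi> where "\<phi> y = (SUP z\<in>E. a z + b z \<bullet> y)" for y
  have affine_eq: "a z + b z \<bullet> y = g z + G z \<bullet> (y - z) - j * (norm (y - z))\<^sup>2 + j * (norm y)\<^sup>2" for z y
    unfolding a_def b_def
    by (simp add: power2_norm_eq_inner inner_diff_left inner_diff_right inner_add_left inner_commute algebra_simps)
  obtain A B where A: "\<And>z. z \<in> E \<Longrightarrow> \<bar>a z\<bar> \<le> A" and B: "\<And>z. z \<in> E \<Longrightarrow> norm (b z) \<le> B"
  proof -
    have "continuous_on K a" "continuous_on K b"
      unfolding a_def b_def using cont by (auto intro!: continuous_intros)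
    then have "bounded (a ` K)" "bounded (b ` K)"
      using K(1) by (auto intro!: compact_imp_bounded compact_continuous_image)
    then obtain A B where "\<And>z. z \<in> K \<Longrightarrow> norm (a z) \<le> A" "\<And>z. z \<in> K \<Longrightarrow> norm (b z) \<le> B"
      unfolding bounded_iff by blast
    then show ?thesis
      using that K(2) by (metis real_norm_def subsetD)
  qed
  have bdd: "bdd_above ((\<lambda>z. a z + b z \<bullet> y) ` E)" for y
  proof (rule bdd_aboveI2)
    fix z assume "z \<in> E"
    have "b z \<bullet> y \<le> B * norm y"
      using norm_cauchy_schwarz[of "b z" y] B[OF \<open>z \<in> E\<close>] by (meson mult_right_mono norm_ge_zero order.trans)
    then show "a z + b z \<bullet> y \<le> A + B * norm y"
      using A[OF \<open>z \<in> E\<close>] by linarith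
  qed
  have affine_le: "a z + b z \<bullet> y \<le> \<phi> y" if "z \<in> E" for z y
    unfolding \<phi>_def using that bdd by (rule cSUP_upper)
  have \<phi>_on_E: "\<phi> x = g x + j * (norm x)\<^sup>2" if "x \<in> E" for x
  proof (rule antisym)
    show "\<phi> x \<le> g x + j * (norm x)\<^sup>2"
      unfolding \<phi>_def using semiconcave[OF _ that] affine_eq by (intro cSUP_least False) auto
    show "g x + j * (norm x)\<^sup>2 \<le> \<phi> x"
      using affine_le[OF that, of x] affine_eq[of x x] by simp
  qed
  show ?thesis
  proof (rule that)
    show "convex_on UNIV \<phi>"
      unfolding \<phi>_def[abs_def] using False bdd by (rule convex_on_SUP_affine)
    show "\<phi> x = g x + j * (norm x)\<^sup>2" if "x \<in> E" for x
      using that by (rule \<phi>_on_E)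
    show "\<phi> x + (G x + (2 * j) *\<^sub>R x) \<bullet> (y - x) \<le> \<phi> y" if "x \<in> E" for x y
      using affine_le[OF that, of y] \<phi>_on_E[OF that] affine_eq[of x x]
      by (simp add: b_def inner_diff_right)
  qed
qed

lemma Limsup_quotient_power2_lt_infinity:
  fixes f :: "'a::real_normed_vector \<Rightarrow> real"
  assumes "0 < \<delta>" "\<And>y. y \<in> E \<Longrightarrow> norm (y - x) < \<delta> \<Longrightarrow> \<bar>f y\<bar> \<le> C * (norm (y - x))\<^sup>2"
  shows "Limsup (at x within E) (\<lambda>y. ereal (\<bar>f y\<bar> / (norm (y - x))\<^sup>2)) < \<infinity>"
proof -
  have "\<forall>\<^sub>F y in at x within E. ereal (\<bar>f y\<bar> / (norm (y - x))\<^sup>2) \<le> ereal C"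
    unfolding eventually_at using assms by (intro exI[of _ \<delta>]) (auto simp: dist_norm divide_le_eq)
  then have "Limsup (at x within E) (\<lambda>y. ereal (\<bar>f y\<bar> / (norm (y - x))\<^sup>2)) \<le> ereal C"
    by (rule Limsup_bounded)
  then show ?thesis
    by (rule order.strict_trans1) simp
qed

lemma first_order_remainder_quadratic_bound:
  fixes \<phi> g :: "'a::euclidean_space \<Rightarrow> real" and G :: "'a \<Rightarrow> 'a"
  assumes cv: "convex_on UNIV \<phi>" and "0 \<le> j" "x \<in> E"
    and \<phi>_on_E: "\<And>z. z \<in> E \<Longrightarrow> \<phi> z = g z + j * (norm z)\<^sup>2"
    and subgrad: "\<And>y. \<phi> x + (G x + (2 * j) *\<^sub>R x) \<bullet> (y - x) \<le> \<phi> y"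
    and regular: "\<And>i. i \<in> Basis \<Longrightarrow> x \<notin> superquadratic_points \<phi> i"
  obtains C \<delta> where "0 < \<delta>"
    "\<And>y. y \<in> E \<Longrightarrow> norm (y - x) < \<delta> \<Longrightarrow> \<bar>g y - g x - G x \<bullet> (y - x)\<bar> \<le> C * (norm (y - x))\<^sup>2"
proof -
  obtain C \<delta> where "0 \<le> C" "0 < \<delta>" and bound:
    "\<And>y. norm (y - x) < \<delta> \<Longrightarrow> \<phi> y - \<phi> x - (G x + (2 * j) *\<^sub>R x) \<bullet> (y - x) \<le> C * (norm (y - x))\<^sup>2"
    using convex_on_quadratic_upper_bound[OF cv subgrad regular] by blast
  have "\<bar>g y - g x - G x \<bullet> (y - x)\<bar> \<le> (C + j) * (norm (y - x))\<^sup>2"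
    if "y \<in> E" "norm (y - x) < \<delta>" for y
  proof -
    have "\<phi> y - \<phi> x - (G x + (2 * j) *\<^sub>R x) \<bullet> (y - x) = g y - g x - G x \<bullet> (y - x) + j * (norm (y - x))\<^sup>2"
      unfolding \<phi>_on_E[OF \<open>y \<in> E\<close>] \<phi>_on_E[OF \<open>x \<in> E\<close>]
      by (simp add: power2_norm_eq_inner inner_diff_left inner_diff_right inner_add_left inner_commute algebra_simps)
    moreover have "0 \<le> C * (norm (y - x))\<^sup>2" "0 \<le> j * (norm (y - x))\<^sup>2"
      using \<open>0 \<le> C\<close> \<open>0 \<le> j\<close> by simp_all
    ultimately show ?thesis
      using bound[OF \<open>norm (y - x) < \<delta>\<close>] subgrad[of y]
      unfolding abs_le_iff distrib_right by linarith
  qed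
  then show ?thesis
    using \<open>0 < \<delta>\<close> that by blast
qed

theorem claim4:
  fixes K :: "'a::euclidean_space set"
    and g :: "'a \<Rightarrow> real"
    and G :: "'a \<Rightarrow> 'a"
    and j :: real
    and E :: "'a set"
  assumes "compact K"
    and "\<And>x. (g has_derivative (\<lambda>h. G x \<bullet> h)) (at x)"
    and "continuous_on UNIV G"
    and "j > 0"
    and "E = {x \<in> K. \<forall>y\<in>K. g y \<ge> g x + G x \<bullet> (y - x) - j * (norm (y - x))\<^sup>2}"
  shows "AE x in lebesgue. x \<in> E \<longrightarrow>
           Limsup (at x within E)
             (\<lambda>y. ereal (\<bar>g y - g x - G x \<bullet> (y - x)\<bar> / (norm (y - x))\<^sup>2)) < \<infinity>"
proof -
  have "continuous_on UNIV g"
    using assms(2) has_derivative_continuous continuous_at_imp_continuous_on by blast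
  obtain \<phi> where cv: "convex_on UNIV \<phi>" and \<phi>_on_E: "\<And>x. x \<in> E \<Longrightarrow> \<phi> x = g x + j * (norm x)\<^sup>2"
    and subgrad: "\<And>x y. x \<in> E \<Longrightarrow> \<phi> x + (G x + (2 * j) *\<^sub>R x) \<bullet> (y - x) \<le> \<phi> y"
  proof (rule convex_extension_with_subgradients[OF assms(1)])
    show "E \<subseteq> K"
      using assms(5) by auto
    show "g x + G x \<bullet> (y - x) - j * (norm (y - x))\<^sup>2 \<le> g y" if "x \<in> E" "y \<in> E" for x y
      using that assms(5) by auto
    show "continuous_on K g" "continuous_on K G"
      using \<open>continuous_on UNIV g\<close> assms(3) by (auto intro: continuous_on_subset)
  qed (rule that)
  have "AE x in lebesgue. \<forall>i\<in>Basis. x \<notin> superquadratic_points \<phi> i"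
    by (rule AE_finite_allI[OF finite_Basis], rule AE_not_in, rule superquadratic_points_null[OF cv])
  then show ?thesis
  proof (rule eventually_mono, intro impI)
    fix x assume regular: "\<forall>i\<in>Basis. x \<notin> superquadratic_points \<phi> i" and "x \<in> E"
    obtain C \<delta> where "0 < \<delta>"
      "\<And>y. y \<in> E \<Longrightarrow> norm (y - x) < \<delta> \<Longrightarrow> \<bar>g y - g x - G x \<bullet> (y - x)\<bar> \<le> C * (norm (y - x))\<^sup>2"
      using first_order_remainder_quadratic_bound[where g = g and G = G, OF cv less_imp_le[OF \<open>j > 0\<close>] \<open>x \<in> E\<close> \<phi>_on_E
          subgrad[OF \<open>x \<in> E\<close>]] regular
      by blast
    then show "Limsup (at x within E) (\<lambda>y. ereal (\<bar>g y - g x - G x \<bullet> (y - x)\<bar> / (norm (y - x))\<^sup>2)) < \<infinity>"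
      by (rule Limsup_quotient_power2_lt_infinity)
  qed
qed

end
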